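(* Let $(X,\tau)$ be a locally compact Hausdorff space that is non-compact, Lindelöf and zero-dimensional. If $\delta$ is a quasi-proximity compatible with $\tau$ such that $\mathcal{V}_\delta$ is transitive, then $|\pi(\delta)\cap T(\tau)|\ge 2^{2^{\aleph_0}}$.
   Context: Quasi-uniformities and quasi-proximities are in the sense of Fletcher–Lindgren; compatible means inducing $\tau$. $\pi(\delta)$ is the set of all quasi-uniformities inducing $\delta$, and $\mathcal{V}_\delta$ is its coarsest (totally bounded) element. A quasi-uniformity is transitive if it has a base of transitive entourages. $T(\tau)$ is the set of compatible transitive quasi-uniformities on $(X,\tau)$. *)

theory Defs
  imports "HOL-Analysis.Analysis"
begin

definition quasi_uniformity :: "'a set \<Rightarrow> ('a \<times> 'a) set set \<Rightarrow> bool" where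
  "quasi_uniformity S \<U> \<longleftrightarrow>
     \<U> \<noteq> {} \<and>
     (\<forall>U\<in>\<U>. Id_on S \<subseteq> U \<and> U \<subseteq> S \<times> S) \<and>
     (\<forall>U\<in>\<U>. \<forall>V\<in>\<U>. U \<inter> V \<in> \<U>) \<and>
     (\<forall>U\<in>\<U>. \<forall>V. U \<subseteq> V \<and> V \<subseteq> S \<times> S \<longrightarrow> V \<in> \<U>) \<and>
     (\<forall>U\<in>\<U>. \<exists>V\<in>\<U>. V O V \<subseteq> U)"

definition qu_compatible :: "'a topology \<Rightarrow> ('a \<times> 'a) set set \<Rightarrow> bool" where
  "qu_compatible X \<U> \<longleftrightarrow>
     (\<forall>G. openin X G \<longleftrightarrow> G \<subseteq> topspace X \<and> (\<forall>x\<in>G. \<exists>U\<in>\<U>. U `` {x} \<subseteq> G))"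

definition transitive_qu :: "('a \<times> 'a) set set \<Rightarrow> bool" where
  "transitive_qu \<U> \<longleftrightarrow> (\<forall>U\<in>\<U>. \<exists>V\<in>\<U>. trans V \<and> V \<subseteq> U)"

definition quasi_proximity :: "'a set \<Rightarrow> ('a set \<Rightarrow> 'a set \<Rightarrow> bool) \<Rightarrow> bool" where
  "quasi_proximity S \<delta> \<longleftrightarrow>
     (\<forall>A B. \<delta> A B \<longrightarrow> A \<subseteq> S \<and> B \<subseteq> S) \<and>
     (\<forall>A\<subseteq>S. \<not> \<delta> A {} \<and> \<not> \<delta> {} A) \<and>
     (\<forall>A\<subseteq>S. \<forall>B\<subseteq>S. A \<inter> B \<noteq> {} \<longrightarrow> \<delta> A B) \<and>
     (\<forall>A\<subseteq>S. \<forall>B\<subseteq>S. \<forall>C\<subseteq>S. \<delta> (A \<union> B) C \<longleftrightarrow> \<delta> A C \<or> \<delta> B C) \<and>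
     (\<forall>A\<subseteq>S. \<forall>B\<subseteq>S. \<forall>C\<subseteq>S. \<delta> A (B \<union> C) \<longleftrightarrow> \<delta> A B \<or> \<delta> A C) \<and>
     (\<forall>A\<subseteq>S. \<forall>B\<subseteq>S. \<not> \<delta> A B \<longrightarrow> (\<exists>C\<subseteq>S. \<not> \<delta> A C \<and> \<not> \<delta> (S - C) B))"

text \<open>Topology induced by a quasi-proximity: closure of A is the set of x with {x} delta A.\<close>
definition qp_compatible :: "'a topology \<Rightarrow> ('a set \<Rightarrow> 'a set \<Rightarrow> bool) \<Rightarrow> bool" where
  "qp_compatible X \<delta> \<longleftrightarrow>
     (\<forall>G. openin X G \<longleftrightarrow> G \<subseteq> topspace X \<and> (\<forall>x\<in>G. \<not> \<delta> {x} (topspace X - G)))"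

definition qprox_of :: "'a set \<Rightarrow> ('a \<times> 'a) set set \<Rightarrow> 'a set \<Rightarrow> 'a set \<Rightarrow> bool" where
  "qprox_of S \<U> A B \<longleftrightarrow> A \<subseteq> S \<and> B \<subseteq> S \<and> (\<forall>U\<in>\<U>. (A \<times> B) \<inter> U \<noteq> {})"

definition qp_class :: "'a set \<Rightarrow> ('a set \<Rightarrow> 'a set \<Rightarrow> bool) \<Rightarrow> ('a \<times> 'a) set set set" where
  "qp_class S \<delta> = {\<U>. quasi_uniformity S \<U> \<and> qprox_of S \<U> = \<delta>}"

definition coarsest_qu :: "'a set \<Rightarrow> ('a set \<Rightarrow> 'a set \<Rightarrow> bool) \<Rightarrow> ('a \<times> 'a) set set" where
  "coarsest_qu S \<delta> = (THE \<V>. \<V> \<in> qp_class S \<delta> \<and> (\<forall>\<U>\<in>qp_class S \<delta>. \<V> \<subseteq> \<U>))"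

definition transitive_compatible_qus :: "'a topology \<Rightarrow> ('a \<times> 'a) set set set" where
  "transitive_compatible_qus X =
     {\<U>. quasi_uniformity (topspace X) \<U> \<and> qu_compatible X \<U> \<and> transitive_qu \<U>}"

end

theory Submission
  imports Defs
begin

text \<open>Cut \<open>X\<close> into countably many disjoint nonempty compact open pieces \<open>K\<^sub>n\<close>; this uses
  local compactness, zero-dimensionality, the Lindelof property and non-compactness. For
  \<open>g : \<nat> \<rightarrow> \<nat>\<close> tending to infinity, \<open>E\<^sub>g = {(x, y). g(n y) \<le> g(n x)}\<close>, with \<open>n x\<close> the index
  of the piece containing \<open>x\<close>, is a transitive entourage, and adjoining any family of such
  \<open>E\<^sub>g\<close> to \<open>\<V>\<^sub>\<delta>\<close> does not change the induced quasi-proximity: near sets either meet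
  infinitely many pieces, where each \<open>g\<close> is large, or are already near inside a single
  compact open piece, which is far from its complement. For each \<open>T \<subseteq> \<nat>\<close> a function
  \<open>g\<^sub>T\<close> is built so that \<open>E\<^sub>g\<^sub>T\<close> lies in the quasi-uniformity generated by \<open>\<V>\<^sub>\<delta>\<close> and
  the \<open>E\<^sub>g\<^sub>S\<close>, \<open>S \<in> \<A>\<close>, only if \<open>T \<in> \<A>\<close>. Hence \<open>\<A>\<close> \<mapsto> \<open>\<langle>\<V>\<^sub>\<delta> \<union> {E\<^sub>g\<^sub>T | T \<in> \<A>}\<rangle>\<close>
  is injective on the \<open>2\<^bsup>2\<^bsup>\<aleph>\<^sub>0\<^esup>\<^esup>\<close> families \<open>\<A>\<close> of subsets of \<open>\<nat>\<close>, and transitivity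
  of \<open>\<V>\<^sub>\<delta>\<close> makes all its values transitive.\<close>

lemma quasi_uniformity_Int:
  "quasi_uniformity S \<U> \<Longrightarrow> U \<in> \<U> \<Longrightarrow> V \<in> \<U> \<Longrightarrow> U \<inter> V \<in> \<U>"
  unfolding quasi_uniformity_def by (elim conjE) (drule bspec, assumption, drule bspec, assumption)

lemma quasi_uniformity_superset:
  "quasi_uniformity S \<U> \<Longrightarrow> U \<in> \<U> \<Longrightarrow> U \<subseteq> V \<Longrightarrow> V \<subseteq> S \<times> S \<Longrightarrow> V \<in> \<U>"
  unfolding quasi_uniformity_def by (elim conjE) (drule bspec, assumption, blast)

lemma quasi_uniformity_subset:
  "quasi_uniformity S \<U> \<Longrightarrow> U \<in> \<U> \<Longrightarrow> U \<subseteq> S \<times> S"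
  unfolding quasi_uniformity_def by (elim conjE) (drule bspec, assumption, blast)

lemma quasi_uniformity_top:
  assumes "quasi_uniformity S \<U>"
  shows "S \<times> S \<in> \<U>"
proof -
  obtain U where "U \<in> \<U>"
    using assms[unfolded quasi_uniformity_def, THEN conjunct1] by blast
  then show ?thesis
    using quasi_uniformity_superset[OF assms _ quasi_uniformity_subset[OF assms] order_refl] by blast
qed

lemma qu_compatible_if_qprox_of:
  assumes "qp_compatible X \<delta>" "quasi_uniformity (topspace X) \<U>" "qprox_of (topspace X) \<U> = \<delta>"
  shows "qu_compatible X \<U>"
proof -
  have open_iff: "openin X G \<longleftrightarrow>
      G \<subseteq> topspace X \<and> (\<forall>x\<in>G. \<not> qprox_of (topspace X) \<U> {x} (topspace X - G))" for G
    using assms(1,3) unfolding qp_compatible_def by simp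
  have "(\<exists>U\<in>\<U>. U `` {x} \<subseteq> G) \<longleftrightarrow> \<not> qprox_of (topspace X) \<U> {x} (topspace X - G)"
    if G: "G \<subseteq> topspace X" and x: "x \<in> G" for G x
  proof
    assume "\<exists>U\<in>\<U>. U `` {x} \<subseteq> G"
    then obtain U where "U \<in> \<U>" "{x} \<times> (topspace X - G) \<inter> U = {}"
      by auto
    then show "\<not> qprox_of (topspace X) \<U> {x} (topspace X - G)"
      unfolding qprox_of_def by blast
  next
    assume "\<not> qprox_of (topspace X) \<U> {x} (topspace X - G)"
    then obtain U where U: "U \<in> \<U>" "{x} \<times> (topspace X - G) \<inter> U = {}"
      using G x unfolding qprox_of_def by auto
    then have "U `` {x} \<subseteq> G"
      using quasi_uniformity_subset[OF assms(2) U(1)] by auto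
    with U(1) show "\<exists>U\<in>\<U>. U `` {x} \<subseteq> G" by blast
  qed
  then show ?thesis
    unfolding qu_compatible_def open_iff by blast
qed

locale qprox_space =
  fixes S :: "'a set" and \<delta> :: "'a set \<Rightarrow> 'a set \<Rightarrow> bool"
  assumes quasi_proximity: "quasi_proximity S \<delta>"
begin

lemma near_subset: "\<delta> A B \<Longrightarrow> A \<subseteq> S \<and> B \<subseteq> S"
  using quasi_proximity unfolding quasi_proximity_def by (metis (no_types))

lemma near_nonempty: "\<delta> A B \<Longrightarrow> A \<noteq> {} \<and> B \<noteq> {}"
  using quasi_proximity near_subset unfolding quasi_proximity_def by (metis (no_types))

lemma near_if_Int: "A \<subseteq> S \<Longrightarrow> B \<subseteq> S \<Longrightarrow> A \<inter> B \<noteq> {} \<Longrightarrow> \<delta> A B"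
  using quasi_proximity unfolding quasi_proximity_def by (metis (no_types))

lemma near_Un_left:
  "A \<subseteq> S \<Longrightarrow> B \<subseteq> S \<Longrightarrow> C \<subseteq> S \<Longrightarrow> \<delta> (A \<union> B) C \<longleftrightarrow> \<delta> A C \<or> \<delta> B C"
  using quasi_proximity unfolding quasi_proximity_def by (metis (no_types))

lemma near_Un_right:
  "A \<subseteq> S \<Longrightarrow> B \<subseteq> S \<Longrightarrow> C \<subseteq> S \<Longrightarrow> \<delta> A (B \<union> C) \<longleftrightarrow> \<delta> A B \<or> \<delta> A C"
  using quasi_proximity unfolding quasi_proximity_def by (metis (no_types))

lemma far_separate:
  "A \<subseteq> S \<Longrightarrow> B \<subseteq> S \<Longrightarrow> \<not> \<delta> A B \<Longrightarrow> \<exists>C\<subseteq>S. \<not> \<delta> A C \<and> \<not> \<delta> (S - C) B"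
  using quasi_proximity unfolding quasi_proximity_def by (metis (no_types))

lemma near_mono:
  assumes "\<delta> A B" "A \<subseteq> A'" "A' \<subseteq> S" "B \<subseteq> B'" "B' \<subseteq> S"
  shows "\<delta> A' B'"
proof -
  have "\<delta> A' B"
    using near_Un_left[of A A' B] assms near_subset Un_absorb1[OF \<open>A \<subseteq> A'\<close>] by auto
  then show ?thesis
    using near_Un_right[of A' B B'] assms near_subset Un_absorb1[OF \<open>B \<subseteq> B'\<close>] by auto
qed

lemma far_disjoint: "A \<subseteq> S \<Longrightarrow> B \<subseteq> S \<Longrightarrow> \<not> \<delta> A B \<Longrightarrow> A \<inter> B = {}"
  using near_if_Int by blast

lemma near_UN_left:
  assumes "finite I" "\<And>i. i \<in> I \<Longrightarrow> A i \<subseteq> S" "\<delta> (\<Union>i\<in>I. A i) B"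
  shows "\<exists>i\<in>I. \<delta> (A i) B"
  using assms
proof (induction I rule: finite_induct)
  case empty
  then show ?case using near_nonempty by auto
next
  case (insert j I)
  then have "\<delta> (A j) B \<or> \<delta> (\<Union>i\<in>I. A i) B"
    using near_Un_left[of "A j" "\<Union>i\<in>I. A i" B] near_subset by auto
  then show ?case using insert by auto
qed

definition far_pairs :: "('a set \<times> 'a set) set" where
  "far_pairs = {p. fst p \<subseteq> S \<and> snd p \<subseteq> S \<and> \<not> \<delta> (fst p) (snd p)}"

lemma mem_far_pairs [simp]: "(C, D) \<in> far_pairs \<longleftrightarrow> C \<subseteq> S \<and> D \<subseteq> S \<and> \<not> \<delta> C D"
  unfolding far_pairs_def by simp

lemma far_pairsD:
  "P \<subseteq> far_pairs \<Longrightarrow> p \<in> P \<Longrightarrow> fst p \<subseteq> S \<and> snd p \<subseteq> S \<and> \<not> \<delta> (fst p) (snd p)"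
  unfolding far_pairs_def by blast

definition sep :: "'a set \<Rightarrow> 'a set \<Rightarrow> ('a \<times> 'a) set" where
  "sep C D = {(x, y). x \<in> S \<and> y \<in> S \<and> (x \<in> C \<longrightarrow> y \<notin> D)}"

definition sep_all :: "('a set \<times> 'a set) set \<Rightarrow> ('a \<times> 'a) set" where
  "sep_all P = (S \<times> S) \<inter> (\<Inter>(C, D)\<in>P. sep C D)"

text \<open>The quasi-uniformity generated by the entourages \<open>sep C D\<close> of far pairs
  together with the extra entourages \<open>\<E>\<close>; for \<open>\<E> = {}\<close> it is \<open>\<V>\<^sub>\<delta>\<close>.\<close>
definition gen_qu :: "('a \<times> 'a) set set \<Rightarrow> ('a \<times> 'a) set set" where
  "gen_qu \<E> = {U. U \<subseteq> S \<times> S \<and> (\<exists>P F. finite P \<and> P \<subseteq> far_pairs \<and> finite F \<and> F \<subseteq> \<E>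
                                         \<and> sep_all P \<inter> \<Inter>F \<subseteq> U)}"

lemma gen_quI:
  "U \<subseteq> S \<times> S \<Longrightarrow> finite P \<Longrightarrow> P \<subseteq> far_pairs \<Longrightarrow> finite F \<Longrightarrow> F \<subseteq> \<E>
    \<Longrightarrow> sep_all P \<inter> \<Inter>F \<subseteq> U \<Longrightarrow> U \<in> gen_qu \<E>"
  unfolding gen_qu_def by blast

lemma gen_quE:
  assumes "U \<in> gen_qu \<E>"
  obtains P F where "U \<subseteq> S \<times> S" "finite P" "P \<subseteq> far_pairs" "finite F" "F \<subseteq> \<E>"
    "sep_all P \<inter> \<Inter>F \<subseteq> U"
  using assms unfolding gen_qu_def by blast

lemma mem_gen_qu: "E \<in> \<E> \<Longrightarrow> E \<subseteq> S \<times> S \<Longrightarrow> E \<in> gen_qu \<E>"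
  by (rule gen_quI[of _ "{}" "{E}"]) (auto simp: sep_all_def)

lemma mem_sep_all:
  "(x, y) \<in> sep_all P \<longleftrightarrow> x \<in> S \<and> y \<in> S \<and> (\<forall>p\<in>P. x \<in> fst p \<longrightarrow> y \<notin> snd p)"
  unfolding sep_all_def sep_def by auto

lemma sep_all_Un: "sep_all (P \<union> Q) = sep_all P \<inter> sep_all Q"
  unfolding sep_all_def by auto

lemma sep_all_insert: "sep_all (insert (C, D) P) = sep_all P \<inter> sep C D"
  unfolding sep_all_def sep_def by auto

lemma sep_all_subset: "sep_all P \<subseteq> S \<times> S"
  unfolding sep_all_def by auto

lemma sep_all_singleton: "sep_all {(C, D)} = sep C D"
  unfolding sep_all_def sep_def by auto

lemma mem_sep_all_if_trace_mono:
  assumes "P \<subseteq> far_pairs" "x \<in> S" "y \<in> S" "\<And>p. p \<in> P \<Longrightarrow> x \<in> fst p \<Longrightarrow> y \<in> fst p"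
  shows "(x, y) \<in> sep_all P"
proof -
  have "y \<notin> snd p" if p: "p \<in> P" "x \<in> fst p" for p
  proof -
    have "fst p \<inter> snd p = {}"
      using far_pairsD[OF assms(1) p(1)] far_disjoint by blast
    then show ?thesis
      using assms(4)[OF p] by blast
  qed
  then show ?thesis
    using assms(2,3) unfolding mem_sep_all by blast
qed

lemma Id_on_subset_sep_all: "P \<subseteq> far_pairs \<Longrightarrow> Id_on S \<subseteq> sep_all P"
  by (auto elim!: Id_onE intro!: mem_sep_all_if_trace_mono)

lemma sep_all_pigeonhole:
  assumes "finite P" "P \<subseteq> far_pairs" "card (Pow P) < L" "\<And>i. i < L \<Longrightarrow> x i \<in> S"
  obtains i j where "i < j" "j < L" "(x j, x i) \<in> sep_all P"
proof -
  define trace where "trace i = {p \<in> P. x i \<in> fst p}" for i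
  have "\<not> inj_on trace {..<L}"
  proof
    assume "inj_on trace {..<L}"
    moreover have "trace ` {..<L} \<subseteq> Pow P"
      unfolding trace_def by auto
    ultimately have "card {..<L} \<le> card (Pow P)"
      using card_inj_on_le assms(1) finite_Pow_iff by blast
    then show False
      using assms(3) by simp
  qed
  then obtain i j where ij: "i < L" "j < L" "i \<noteq> j" "trace i = trace j"
    unfolding inj_on_def by auto
  have "x i \<in> fst p \<longleftrightarrow> x j \<in> fst p" if "p \<in> P" for p
    using ij(4) that unfolding trace_def by blast
  then have "(x i, x j) \<in> sep_all P" "(x j, x i) \<in> sep_all P"
    using ij(1,2) by (auto intro!: mem_sep_all_if_trace_mono assms(2,4))
  then show ?thesis
    using ij(1-3) that[of i j] that[of j i] by (cases "i < j") auto
qed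

lemma near_split_left:
  assumes "\<delta> A B"
  shows "\<delta> (A - C) B \<or> \<delta> (A \<inter> C) B"
proof -
  have S: "A - C \<subseteq> S" "A \<inter> C \<subseteq> S" "B \<subseteq> S"
    using near_subset[OF assms] by auto
  have "\<delta> ((A - C) \<union> (A \<inter> C)) B"
    using assms by (simp add: Un_Diff_Int)
  then show ?thesis
    unfolding near_Un_left[OF S] .
qed

lemma near_split_right:
  assumes "\<delta> A B"
  shows "\<delta> A (B - D) \<or> \<delta> A (B \<inter> D)"
proof -
  have S: "A \<subseteq> S" "B - D \<subseteq> S" "B \<inter> D \<subseteq> S"
    using near_subset[OF assms] by auto
  have "\<delta> A ((B - D) \<union> (B \<inter> D))"
    using assms by (simp add: Un_Diff_Int)
  then show ?thesis
    unfolding near_Un_right[OF S] .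
qed

lemma near_restrict_sep:
  assumes "\<delta> A B" "(C, D) \<in> far_pairs"
  shows "\<exists>A'\<subseteq>A. \<exists>B'\<subseteq>B. \<delta> A' B' \<and> (\<forall>x\<in>A'. \<forall>y\<in>B'. x \<in> C \<longrightarrow> y \<notin> D)"
  using near_split_left[OF assms(1), of C]
proof
  assume "\<delta> (A - C) B"
  then show ?thesis by (intro exI[of _ "A - C"]) auto
next
  assume near: "\<delta> (A \<inter> C) B"
  have CD: "C \<subseteq> S" "D \<subseteq> S" "\<not> \<delta> C D"
    using assms(2) by simp_all
  have "\<not> \<delta> (A \<inter> C) (B \<inter> D)"
  proof
    assume "\<delta> (A \<inter> C) (B \<inter> D)"
    then have "\<delta> C D"
      by (rule near_mono) (use CD in auto)
    with CD(3) show False ..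
  qed
  then have "\<delta> (A \<inter> C) (B - D)"
    using near_split_right[OF near, of D] by blast
  then show ?thesis by (intro exI[of _ "A \<inter> C"] conjI exI[of _ "B - D"]) auto
qed

lemma near_restrict_sep_all:
  assumes "finite P" "P \<subseteq> far_pairs" "\<delta> A B"
  shows "\<exists>A'\<subseteq>A. \<exists>B'\<subseteq>B. \<delta> A' B' \<and> A' \<times> B' \<subseteq> sep_all P"
  using assms
proof (induction P rule: finite_induct)
  case empty
  have "A \<times> B \<subseteq> sep_all {}"
    using near_subset[OF empty(2)] unfolding sep_all_def by auto
  with empty(2) show ?case by blast
next
  case (insert p P)
  obtain C D where p: "p = (C, D)" by force
  have far: "(C, D) \<in> far_pairs" "P \<subseteq> far_pairs"
    using insert.prems(1) p by auto
  obtain A' B' where AB': "A' \<subseteq> A" "B' \<subseteq> B" "\<delta> A' B'" "A' \<times> B' \<subseteq> sep_all P"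
    using insert.IH[OF far(2) insert.prems(2)] by blast
  obtain A'' B'' where AB'': "A'' \<subseteq> A'" "B'' \<subseteq> B'" "\<delta> A'' B''"
    "\<forall>x\<in>A''. \<forall>y\<in>B''. x \<in> C \<longrightarrow> y \<notin> D"
    using near_restrict_sep[OF AB'(3) far(1)] by blast
  have "A'' \<times> B'' \<subseteq> sep C D"
    using AB''(4) near_subset[OF AB''(3)] unfolding sep_def by auto
  moreover have "A'' \<times> B'' \<subseteq> sep_all P"
    using AB'(4) AB''(1,2) by blast
  ultimately have "A'' \<times> B'' \<subseteq> sep_all (insert p P)"
    unfolding p sep_all_insert by blast
  moreover have "A'' \<subseteq> A" "B'' \<subseteq> B"
    using AB' AB'' by auto
  ultimately show ?case
    using AB''(3) by blast
qed

text \<open>The strong axiom splits each far pair \<open>(C, D)\<close> through some \<open>E\<close> with \<open>C\<close> far from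
  \<open>E\<close> and \<open>S - E\<close> far from \<open>D\<close>.\<close>
lemma sep_all_half:
  assumes "finite P" "P \<subseteq> far_pairs"
  shows "\<exists>P'. finite P' \<and> P' \<subseteq> far_pairs \<and> sep_all P' O sep_all P' \<subseteq> sep_all P"
proof -
  have "\<forall>p\<in>P. \<exists>E. E \<subseteq> S \<and> \<not> \<delta> (fst p) E \<and> \<not> \<delta> (S - E) (snd p)"
  proof
    fix p assume "p \<in> P"
    then have "fst p \<subseteq> S" "snd p \<subseteq> S" "\<not> \<delta> (fst p) (snd p)"
      using far_pairsD[OF assms(2)] by blast+
    then show "\<exists>E. E \<subseteq> S \<and> \<not> \<delta> (fst p) E \<and> \<not> \<delta> (S - E) (snd p)"
      by (rule far_separate)
  qed
  from bchoice[OF this] obtain e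
    where e: "\<forall>p\<in>P. e p \<subseteq> S \<and> \<not> \<delta> (fst p) (e p) \<and> \<not> \<delta> (S - e p) (snd p)" ..
  define P' where "P' = (\<lambda>p. (fst p, e p)) ` P \<union> (\<lambda>p. (S - e p, snd p)) ` P"
  have "P' \<subseteq> far_pairs"
  proof
    fix q assume "q \<in> P'"
    then obtain p where p: "p \<in> P" "q = (fst p, e p) \<or> q = (S - e p, snd p)"
      unfolding P'_def by blast
    have "fst p \<subseteq> S" "snd p \<subseteq> S" "e p \<subseteq> S" "\<not> \<delta> (fst p) (e p)" "\<not> \<delta> (S - e p) (snd p)"
      using far_pairsD[OF assms(2) p(1)] bspec[OF e p(1)] by simp_all
    with p(2) show "q \<in> far_pairs"
      unfolding far_pairs_def by auto
  qed
  moreover have "sep_all P' O sep_all P' \<subseteq> sep_all P"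
  proof
    fix w assume "w \<in> sep_all P' O sep_all P'"
    then obtain x y z where w: "w = (x, z)"
      and xy: "(x, y) \<in> sep_all P'" and yz: "(y, z) \<in> sep_all P'"
      by (elim relcompE) auto
    have "z \<notin> snd p" if p: "p \<in> P" "x \<in> fst p" for p
    proof -
      have "(fst p, e p) \<in> P'" "(S - e p, snd p) \<in> P'"
        using p(1) unfolding P'_def by auto
      then have "y \<notin> e p" and "y \<in> S - e p \<longrightarrow> z \<notin> snd p"
        using p(2) xy yz unfolding mem_sep_all by (metis fst_conv snd_conv)+
      moreover have "y \<in> S"
        using xy unfolding mem_sep_all by simp
      ultimately show ?thesis by simp
    qed
    moreover have "x \<in> S" "z \<in> S"
      using xy yz unfolding mem_sep_all by simp_all
    ultimately show "w \<in> sep_all P"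
      unfolding w mem_sep_all by simp
  qed
  moreover have "finite P'"
    unfolding P'_def using assms(1) by simp
  ultimately show ?thesis by blast
qed

lemma Id_on_subset_gen_qu:
  assumes "\<And>E. E \<in> \<E> \<Longrightarrow> Id_on S \<subseteq> E" "U \<in> gen_qu \<E>"
  shows "Id_on S \<subseteq> U"
proof -
  obtain P F where "P \<subseteq> far_pairs" "F \<subseteq> \<E>" "sep_all P \<inter> \<Inter>F \<subseteq> U"
    using assms(2) by (elim gen_quE)
  moreover have "Id_on S \<subseteq> \<Inter>F"
    using \<open>F \<subseteq> \<E>\<close> assms(1) by (intro Inter_greatest) blast
  ultimately show ?thesis
    using Id_on_subset_sep_all by blast
qed

lemma gen_qu_Int: "U \<in> gen_qu \<E> \<Longrightarrow> V \<in> gen_qu \<E> \<Longrightarrow> U \<inter> V \<in> gen_qu \<E>"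
proof -
  assume "U \<in> gen_qu \<E>" "V \<in> gen_qu \<E>"
  then obtain P F P' F' where
    "U \<subseteq> S \<times> S" "finite P" "P \<subseteq> far_pairs" "finite F" "F \<subseteq> \<E>" "sep_all P \<inter> \<Inter>F \<subseteq> U"
    "V \<subseteq> S \<times> S" "finite P'" "P' \<subseteq> far_pairs" "finite F'" "F' \<subseteq> \<E>" "sep_all P' \<inter> \<Inter>F' \<subseteq> V"
    by (elim gen_quE)
  then show "U \<inter> V \<in> gen_qu \<E>"
    by (intro gen_quI[of _ "P \<union> P'" "F \<union> F'"]) (auto simp: sep_all_Un)
qed

lemma gen_qu_superset:
  assumes "U \<in> gen_qu \<E>" "U \<subseteq> V" "V \<subseteq> S \<times> S"
  shows "V \<in> gen_qu \<E>"
proof -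
  obtain P F where "finite P" "P \<subseteq> far_pairs" "finite F" "F \<subseteq> \<E>" "sep_all P \<inter> \<Inter>F \<subseteq> U"
    using assms(1) by (elim gen_quE)
  with assms(2,3) show ?thesis
    by (intro gen_quI[of _ P F]) auto
qed

lemma gen_qu_half:
  assumes "\<And>E. E \<in> \<E> \<Longrightarrow> trans E" "U \<in> gen_qu \<E>"
  shows "\<exists>V\<in>gen_qu \<E>. V O V \<subseteq> U"
proof -
  obtain P F where PF: "finite P" "P \<subseteq> far_pairs" "finite F" "F \<subseteq> \<E>"
    "sep_all P \<inter> \<Inter>F \<subseteq> U"
    using assms(2) by (elim gen_quE)
  obtain P' where P': "finite P'" "P' \<subseteq> far_pairs" "sep_all P' O sep_all P' \<subseteq> sep_all P"
    using sep_all_half[OF PF(1,2)] by blast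
  define V where "V = sep_all P' \<inter> \<Inter>F"
  have "V \<in> gen_qu \<E>"
    unfolding V_def using P' PF(3,4) sep_all_subset[of P'] by (intro gen_quI[of _ P' F]) auto
  have V: "V \<subseteq> sep_all P'" "V \<subseteq> \<Inter>F"
    unfolding V_def by auto
  have "V O V \<subseteq> R" if R: "R \<in> F" for R
  proof -
    have "V \<subseteq> R"
      using V(2) R by blast
    then have "V O V \<subseteq> R O R"
      using relcomp_mono by blast
    also have "\<dots> \<subseteq> R"
    proof (rule trans_O_subset)
      have "R \<in> \<E>"
        using PF(4) R by blast
      then show "trans R"
        by (rule assms(1))
    qed
    finally show ?thesis .
  qed
  then have "V O V \<subseteq> \<Inter>F"
    by (rule Inter_greatest)
  moreover have "V O V \<subseteq> sep_all P"
    using order_trans[OF relcomp_mono[OF V(1) V(1)] P'(3)] .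
  ultimately have "V O V \<subseteq> U"
    using PF(5) by blast
  then show ?thesis
    using \<open>V \<in> gen_qu \<E>\<close> by (rule bexI)
qed

lemma quasi_uniformity_gen_qu:
  assumes "\<And>E. E \<in> \<E> \<Longrightarrow> Id_on S \<subseteq> E \<and> trans E"
  shows "quasi_uniformity S (gen_qu \<E>)"
  unfolding quasi_uniformity_def
proof (intro conjI ballI allI impI)
  show "gen_qu \<E> \<noteq> {}"
    using gen_quI[of "S \<times> S" "{}" "{}"] by (auto simp: sep_all_def)
next
  fix U assume U: "U \<in> gen_qu \<E>"
  show "Id_on S \<subseteq> U"
    using assms by (intro Id_on_subset_gen_qu[OF _ U]) blast
  show "U \<subseteq> S \<times> S"
    using U by (elim gen_quE)
  show "\<exists>V\<in>gen_qu \<E>. V O V \<subseteq> U"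
    using assms by (intro gen_qu_half[OF _ U]) blast
next
  fix U V assume "U \<in> gen_qu \<E>"
  then show "V \<in> gen_qu \<E> \<Longrightarrow> U \<inter> V \<in> gen_qu \<E>"
    and "U \<subseteq> V \<and> V \<subseteq> S \<times> S \<Longrightarrow> V \<in> gen_qu \<E>"
    using gen_qu_Int gen_qu_superset by blast+
qed

text \<open>Adjoining \<open>\<E>\<close> to \<open>\<V>\<^sub>\<delta>\<close> keeps \<open>\<delta>\<close> as soon as every near pair \<open>A, B\<close> has
  points \<open>a \<in> A\<close>, \<open>b \<in> B\<close> related by finitely many members of \<open>\<E>\<close> at once: the far
  pairs are dealt with first by shrinking \<open>A\<close> and \<open>B\<close>.\<close>
lemma qprox_of_gen_qu:
  assumes "\<And>A B F. \<delta> A B \<Longrightarrow> finite F \<Longrightarrow> F \<subseteq> \<E> \<Longrightarrow> (A \<times> B) \<inter> \<Inter>F \<noteq> {}"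
  shows "qprox_of S (gen_qu \<E>) = \<delta>"
proof (intro ext iffI)
  fix A B assume near: "qprox_of S (gen_qu \<E>) A B"
  show "\<delta> A B"
  proof (rule ccontr)
    assume far: "\<not> \<delta> A B"
    have AB: "A \<subseteq> S" "B \<subseteq> S"
      using near unfolding qprox_of_def by auto
    have "sep A B \<in> gen_qu \<E>"
      using AB far by (intro gen_quI[of _ "{(A, B)}" "{}"]) (auto simp: sep_all_singleton sep_def)
    moreover have "(A \<times> B) \<inter> sep A B = {}"
      unfolding sep_def by auto
    ultimately show False
      using near unfolding qprox_of_def by blast
  qed
next
  fix A B assume near: "\<delta> A B"
  have "A \<times> B \<inter> U \<noteq> {}" if U: "U \<in> gen_qu \<E>" for U
  proof -
    obtain P F where PF: "finite P" "P \<subseteq> far_pairs" "finite F" "F \<subseteq> \<E>"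
      "sep_all P \<inter> \<Inter>F \<subseteq> U"
      using U by (elim gen_quE)
    obtain A' B' where AB': "A' \<subseteq> A" "B' \<subseteq> B" "\<delta> A' B'" "A' \<times> B' \<subseteq> sep_all P"
      using near_restrict_sep_all[OF PF(1,2) near] by blast
    obtain a b where ab: "(a, b) \<in> A' \<times> B'" "(a, b) \<in> \<Inter>F"
      using assms[OF AB'(3) PF(3,4)] by auto
    then have "(a, b) \<in> U"
      using AB'(4) PF(5) by blast
    moreover have "(a, b) \<in> A \<times> B"
      using ab(1) AB'(1,2) by blast
    ultimately show ?thesis by blast
  qed
  with near show "qprox_of S (gen_qu \<E>) A B"
    unfolding qprox_of_def using near_subset by blast
qed

lemma gen_qu_empty_in_qp_class: "gen_qu {} \<in> qp_class S \<delta>"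
  unfolding qp_class_def
  using quasi_uniformity_gen_qu[of "{}"] qprox_of_gen_qu[of "{}"] near_nonempty by auto

lemma gen_qu_empty_subset:
  assumes "\<U> \<in> qp_class S \<delta>"
  shows "gen_qu {} \<subseteq> \<U>"
proof
  have qu: "quasi_uniformity S \<U>" and qq: "qprox_of S \<U> = \<delta>"
    using assms unfolding qp_class_def by auto
  have sep_mem: "sep C D \<in> \<U>" if CD: "(C, D) \<in> far_pairs" for C D
  proof -
    obtain W where W: "W \<in> \<U>" "C \<times> D \<inter> W = {}"
      using qq CD unfolding qprox_of_def by auto
    then have "W \<subseteq> sep C D"
      using quasi_uniformity_subset[OF qu W(1)] unfolding sep_def by auto
    then show ?thesis
      using quasi_uniformity_superset[OF qu W(1)] unfolding sep_def by auto
  qed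
  have sep_all_mem: "sep_all P \<in> \<U>" if "finite P" "P \<subseteq> far_pairs" for P
    using that
  proof (induction P rule: finite_induct)
    case empty
    then show ?case using quasi_uniformity_top[OF qu] by (simp add: sep_all_def)
  next
    case (insert p P)
    then show ?case
      using sep_mem quasi_uniformity_Int[OF qu] by (cases p) (simp add: sep_all_insert)
  qed
  fix V assume "V \<in> gen_qu {}"
  then obtain P where "finite P" "P \<subseteq> far_pairs" "sep_all P \<subseteq> V" "V \<subseteq> S \<times> S"
    by (elim gen_quE) auto
  then show "V \<in> \<U>"
    using quasi_uniformity_superset[OF qu sep_all_mem] by blast
qed

lemma coarsest_qu_eq: "coarsest_qu S \<delta> = gen_qu {}"
  unfolding coarsest_qu_def
  using gen_qu_empty_in_qp_class gen_qu_empty_subset by (intro the_equality) blast+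

lemma transitive_gen_qu:
  assumes "transitive_qu (gen_qu {})" "\<And>E. E \<in> \<E> \<Longrightarrow> trans E"
  shows "transitive_qu (gen_qu \<E>)"
  unfolding transitive_qu_def
proof
  fix U assume "U \<in> gen_qu \<E>"
  then obtain P F where PF: "finite P" "P \<subseteq> far_pairs" "finite F" "F \<subseteq> \<E>"
    "sep_all P \<inter> \<Inter>F \<subseteq> U"
    by (elim gen_quE)
  have "sep_all P \<in> gen_qu {}"
    using PF(1,2) sep_all_subset[of P] by (intro gen_quI[of _ P "{}"]) auto
  then obtain W where W: "W \<in> gen_qu {}" "trans W" "W \<subseteq> sep_all P"
    using assms(1) unfolding transitive_qu_def by blast
  then obtain P' where P': "finite P'" "P' \<subseteq> far_pairs" "sep_all P' \<subseteq> W" "W \<subseteq> S \<times> S"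
    by (elim gen_quE) auto
  have "W \<inter> \<Inter>F \<in> gen_qu \<E>"
    using P' PF(3,4) by (intro gen_quI[of _ P' F]) auto
  moreover have "trans (W \<inter> \<Inter>F)"
    using W(2) assms(2) PF(4) by (intro trans_Int trans_INTER[of F id, simplified]) auto
  moreover have "W \<inter> \<Inter>F \<subseteq> U"
    using W(3) PF(5) by blast
  ultimately show "\<exists>V\<in>gen_qu \<E>. trans V \<and> V \<subseteq> U" by blast
qed

end

locale compatible_qprox = qprox_space S \<delta> for S :: "'a set" and \<delta> +
  fixes X :: "'a topology"
  assumes topspace_eq: "topspace X = S" and compatible: "qp_compatible X \<delta>"
begin

lemma openin_iff_far: "openin X G \<longleftrightarrow> G \<subseteq> S \<and> (\<forall>x\<in>G. \<not> \<delta> {x} (S - G))"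
  using compatible unfolding qp_compatible_def topspace_eq by blast

lemma openin_subset_S: "openin X G \<Longrightarrow> G \<subseteq> S"
  using openin_iff_far by blast

lemma open_neighbourhood_far:
  assumes x: "x \<in> S" and D: "D \<subseteq> S" and far: "\<not> \<delta> {x} D"
  shows "\<exists>G. openin X G \<and> x \<in> G \<and> \<not> \<delta> G D"
proof -
  obtain C where C: "C \<subseteq> S" "\<not> \<delta> {x} C" "\<not> \<delta> (S - C) D"
    using far_separate[of "{x}" D] x D far by auto
  define G where "G = {y \<in> S. \<not> \<delta> {y} C}"
  have "\<not> \<delta> {y} (S - G)" if y: "y \<in> G" for y
  proof -
    have yS: "y \<in> S" "\<not> \<delta> {y} C"
      using y unfolding G_def by auto
    obtain E where E: "E \<subseteq> S" "\<not> \<delta> {y} E" "\<not> \<delta> (S - E) C"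
      using far_separate[of "{y}" C] yS C by auto
    have "S - G \<subseteq> E"
    proof
      fix z assume z: "z \<in> S - G"
      then have near: "\<delta> {z} C"
        unfolding G_def by auto
      show "z \<in> E"
      proof (rule ccontr)
        assume "z \<notin> E"
        then have "\<delta> (S - E) C"
          using near_mono[OF near, of "S - E" C] z C by auto
        with E(3) show False ..
      qed
    qed
    then show ?thesis
      using E near_mono[of "{y}" "S - G" "{y}" E] yS by auto
  qed
  then have "openin X G"
    unfolding openin_iff_far G_def by auto
  moreover have "x \<in> G"
    using x C unfolding G_def by auto
  moreover have "G \<subseteq> S - C"
    using near_if_Int[of "{_}" C] C(1) unfolding G_def by auto
  then have "\<not> \<delta> G D"
    using near_mono[of G D "S - C" D] C D by auto
  ultimately show ?thesis by blast
qed

text \<open>Cover \<open>K\<close> by open sets far from \<open>S - K\<close> and use finite additivity.\<close>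
lemma compact_open_far_complement:
  assumes compact: "compactin X K" and opn: "openin X K"
  shows "\<not> \<delta> K (S - K)"
proof
  assume near: "\<delta> K (S - K)"
  have KS: "K \<subseteq> S"
    using openin_subset_S[OF opn] .
  define \<G> where "\<G> = {G. openin X G \<and> \<not> \<delta> G (S - K)}"
  have "K \<subseteq> \<Union>\<G>"
  proof
    fix x assume "x \<in> K"
    then obtain G where "openin X G" "x \<in> G" "\<not> \<delta> G (S - K)"
      using open_neighbourhood_far[of x "S - K"] opn KS unfolding openin_iff_far by blast
    then show "x \<in> \<Union>\<G>"
      unfolding \<G>_def by blast
  qed
  then obtain \<F> where F: "finite \<F>" "\<F> \<subseteq> \<G>" "K \<subseteq> \<Union>\<F>"
    using compact unfolding compactin_def \<G>_def by (metis (no_types, lifting) mem_Collect_eq)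
  have FS: "\<And>G. G \<in> \<F> \<Longrightarrow> G \<subseteq> S"
    using F(2) openin_subset_S unfolding \<G>_def by blast
  have "\<delta> (\<Union>G\<in>\<F>. G) (S - K)"
    using near_mono[OF near, of "\<Union>\<F>" "S - K"] F(3) FS by auto
  then obtain G where "G \<in> \<F>" "\<delta> G (S - K)"
    using near_UN_left[of \<F> "\<lambda>G. G" "S - K"] F(1) FS by blast
  then show False
    using F(2) unfolding \<G>_def by blast
qed

lemma near_Int_compact_open:
  assumes "compactin X K" "openin X K" "A \<subseteq> K" "\<delta> A B"
  shows "\<delta> A (B \<inter> K)"
proof -
  have "\<not> \<delta> A (B - K)"
  proof
    assume "\<delta> A (B - K)"
    moreover have "B - K \<subseteq> S - K"
      using near_subset[OF assms(4)] by auto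
    ultimately have "\<delta> K (S - K)"
      using near_mono[of A "B - K" K "S - K"] assms(3) openin_subset_S[OF assms(2)] by auto
    then show False
      using compact_open_far_complement[OF assms(1,2)] by blast
  qed
  then show ?thesis
    using near_split_right[OF assms(4), of K] by blast
qed

end

lemma filterlim_at_top_iff_finite_sublevels:
  fixes g :: "nat \<Rightarrow> nat"
  shows "filterlim g at_top sequentially \<longleftrightarrow> (\<forall>k. finite {n. g n \<le> k})"
proof -
  have "filterlim g at_top sequentially \<longleftrightarrow> (\<forall>k. finite {n. g n < k})"
  proof -
    have "eventually (\<lambda>n. k \<le> g n) sequentially \<longleftrightarrow> finite {n. g n < k}" for k
      by (simp add: cofinite_eq_sequentially[symmetric] eventually_cofinite not_le)
    then show ?thesis
      unfolding filterlim_at_top by blast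
  qed
  also have "\<dots> \<longleftrightarrow> (\<forall>k. finite {n. g n \<le> k})"
  proof
    assume "\<forall>k. finite {n. g n < k}"
    then show "\<forall>k. finite {n. g n \<le> k}"
      by (simp flip: less_Suc_eq_le)
  next
    assume fin: "\<forall>k. finite {n. g n \<le> k}"
    show "\<forall>k. finite {n. g n < k}"
    proof
      fix k
      have "{n. g n < k} \<subseteq> {n. g n \<le> k}" by auto
      then show "finite {n. g n < k}"
        using fin finite_subset by blast
    qed
  qed
  finally show ?thesis .
qed

definition passes :: "nat set \<Rightarrow> nat \<Rightarrow> bool" where
  "passes T c \<longleftrightarrow> T \<inter> set_decode (fst (prod_decode c)) = set_decode (snd (prod_decode c))"

text \<open>\<open>n\<close> codes a pair \<open>(b, j)\<close> and \<open>b\<close> a pair \<open>(c, L)\<close>, where \<open>c\<close> codes a finite window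
  \<open>W\<close> and a pattern \<open>Q \<subseteq> W\<close>; \<open>T\<close> passes \<open>c\<close> if \<open>T \<inter> W = Q\<close>. On the block \<open>j < L\<close> the rank
  decreases in \<open>j\<close> for sets passing the test and increases for all others; off the blocks
  it is the identity.\<close>
definition block_rank :: "nat set \<Rightarrow> nat \<Rightarrow> nat" where
  "block_rank T n = (let b = fst (prod_decode n); j = snd (prod_decode n); L = snd (prod_decode b) in
     if j < L then (if passes T (fst (prod_decode b)) then b + (L - j) else b + j) else n)"

lemma finite_block_rank_le: "finite {n. block_rank T n \<le> k}"
proof -
  have "{n. block_rank T n \<le> k} \<subseteq> {..k} \<union> prod_encode ` ({..k} \<times> {..k})"
  proof
    fix n assume n: "n \<in> {n. block_rank T n \<le> k}"
    obtain b j where bj: "prod_decode n = (b, j)" by force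
    obtain c L where cL: "prod_decode b = (c, L)" by force
    have n_eq: "n = prod_encode (b, j)"
      using bj by (metis prod_decode_inverse)
    have "L \<le> b"
      using cL le_prod_encode_2[of L c] by (metis prod_decode_inverse)
    show "n \<in> {..k} \<union> prod_encode ` ({..k} \<times> {..k})"
    proof (cases "j < L")
      case True
      then have "b \<le> block_rank T n"
        unfolding block_rank_def Let_def using bj cL by auto
      then have "(b, j) \<in> {..k} \<times> {..k}"
        using n True \<open>L \<le> b\<close> by auto
      then show ?thesis
        using n_eq by blast
    next
      case False
      then have "block_rank T n = n"
        unfolding block_rank_def Let_def using bj cL by auto
      then show ?thesis
        using n by auto
    qed
  qed
  then show ?thesis
    by (rule finite_subset) auto
qed

lemma filterlim_block_rank: "filterlim (block_rank T) at_top sequentially"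
  unfolding filterlim_at_top_iff_finite_sublevels using finite_block_rank_le by blast

text \<open>The block with window the points where \<open>T\<close> differs from the members of \<open>\<A>\<close> and
  pattern \<open>T\<close> on it is passed by \<open>T\<close> only.\<close>
lemma block_rank_separates:
  fixes L :: nat
  assumes "finite \<A>" "T \<notin> \<A>"
  obtains q where "\<And>i j. i < j \<Longrightarrow> j < L \<Longrightarrow>
    (\<forall>A\<in>\<A>. block_rank A (q i) \<le> block_rank A (q j)) \<and> block_rank T (q j) < block_rank T (q i)"
proof -
  have "\<exists>x. (x \<in> A) \<noteq> (x \<in> T)" if "A \<in> \<A>" for A
  proof -
    have "A \<noteq> T"
      using that assms(2) by blast
    then show ?thesis
      by (auto simp: set_eq_iff)
  qed
  then obtain w where w: "\<And>A. A \<in> \<A> \<Longrightarrow> (w A \<in> A) \<noteq> (w A \<in> T)"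
    by metis
  define W where "W = w ` \<A>"
  have "finite W"
    using assms(1) unfolding W_def by simp
  define c where "c = prod_encode (set_encode W, set_encode (T \<inter> W))"
  have decode_c: "prod_decode c = (set_encode W, set_encode (T \<inter> W))"
    unfolding c_def by simp
  have passes_T: "passes T c"
    unfolding passes_def decode_c using \<open>finite W\<close> by simp
  have not_passes: "\<not> passes A c" if A: "A \<in> \<A>" for A
  proof
    assume "passes A c"
    then have "A \<inter> W = T \<inter> W"
      unfolding passes_def decode_c using \<open>finite W\<close> by simp
    moreover have "w A \<in> W"
      using A unfolding W_def by blast
    ultimately show False
      using w[OF A] by blast
  qed
  define b where "b = prod_encode (c, L)"
  define q where "q i = prod_encode (b, i)" for i
  have rank_q: "block_rank A (q i) = (if passes A c then b + (L - i) else b + i)" if "i < L" for A i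
    unfolding block_rank_def q_def Let_def b_def using that by simp
  show ?thesis
    by (rule that[of q]) (auto simp: rank_q passes_T not_passes)
qed

locale compact_open_partition = compatible_qprox S \<delta> X for S :: "'a set" and \<delta> and X +
  fixes K :: "nat \<Rightarrow> 'a set"
  assumes compactin_K: "\<And>n. compactin X (K n)" and openin_K: "\<And>n. openin X (K n)"
    and K_nonempty: "\<And>n. K n \<noteq> {}" and disjoint_K: "disjoint_family K"
    and UN_K: "(\<Union>n. K n) = S"
begin

definition piece :: "'a \<Rightarrow> nat" where
  "piece x = (THE n. x \<in> K n)"

lemma piece_eq: "x \<in> K n \<Longrightarrow> piece x = n"
  unfolding piece_def using disjoint_K unfolding disjoint_family_on_def by (intro the_equality) auto

lemma in_K_piece: "x \<in> S \<Longrightarrow> x \<in> K (piece x)"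
  using UN_K piece_eq by blast

definition level_preorder :: "(nat \<Rightarrow> nat) \<Rightarrow> ('a \<times> 'a) set" where
  "level_preorder g = {(x, y). x \<in> S \<and> y \<in> S \<and> g (piece y) \<le> g (piece x)}"

lemma Id_on_subset_level_preorder: "Id_on S \<subseteq> level_preorder g"
  unfolding level_preorder_def by auto

lemma trans_level_preorder: "trans (level_preorder g)"
  unfolding level_preorder_def trans_def by auto

text \<open>Near sets either meet infinitely many pieces, where every \<open>g \<longrightarrow> \<infinity>\<close> is large,
  or are already near inside a single piece.\<close>
lemma near_ex_levels_le:
  fixes G :: "(nat \<Rightarrow> nat) set"
  assumes "\<delta> A B" "finite G" "\<And>g. g \<in> G \<Longrightarrow> filterlim g at_top sequentially"
  shows "\<exists>a\<in>A. \<exists>b\<in>B. \<forall>g\<in>G. g (piece b) \<le> g (piece a)"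
proof (cases "finite (piece ` A)")
  case True
  have AB: "A \<subseteq> S" "B \<subseteq> S"
    using near_subset[OF assms(1)] by auto
  have "A = (\<Union>n\<in>piece ` A. A \<inter> K n)"
    using in_K_piece AB(1) by blast
  then have "\<delta> (\<Union>n\<in>piece ` A. A \<inter> K n) B"
    using assms(1) by simp
  then obtain n where "\<delta> (A \<inter> K n) B"
    using near_UN_left[OF True, of "\<lambda>n. A \<inter> K n" B] AB by blast
  then have "\<delta> (A \<inter> K n) (B \<inter> K n)"
    using near_Int_compact_open[OF compactin_K openin_K] by blast
  then obtain a b where "a \<in> A \<inter> K n" "b \<in> B \<inter> K n"
    using near_nonempty by blast
  moreover have "piece a = n" "piece b = n"
    using calculation piece_eq by auto
  ultimately show ?thesis by (metis IntD1 order_refl)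
next
  case False
  obtain b where b: "b \<in> B"
    using near_nonempty[OF assms(1)] by blast
  define Low where "Low = (\<Union>g\<in>G. {n. g n \<le> g (piece b)})"
  have "finite {n. g n \<le> g (piece b)}" if "g \<in> G" for g
    using assms(3)[OF that] unfolding filterlim_at_top_iff_finite_sublevels by blast
  then have "finite Low"
    unfolding Low_def using assms(2) by blast
  then have "\<not> piece ` A \<subseteq> Low"
    using False finite_subset by blast
  then obtain a where a: "a \<in> A" "piece a \<notin> Low"
    by blast
  then have "\<forall>g\<in>G. g (piece b) \<le> g (piece a)"
    unfolding Low_def by auto
  with a(1) b show ?thesis by blast
qed

lemma qprox_of_gen_levels:
  fixes G :: "(nat \<Rightarrow> nat) set"
  assumes "\<And>g. g \<in> G \<Longrightarrow> filterlim g at_top sequentially"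
  shows "qprox_of S (gen_qu (level_preorder ` G)) = \<delta>"
proof (rule qprox_of_gen_qu)
  fix A B F assume near: "\<delta> A B" and F: "finite F" "F \<subseteq> level_preorder ` G"
  obtain G' where G': "G' \<subseteq> G" "finite G'" "F = level_preorder ` G'"
    using finite_subset_image[OF F] by blast
  obtain a b where ab: "a \<in> A" "b \<in> B" "\<forall>g\<in>G'. g (piece b) \<le> g (piece a)"
    using near_ex_levels_le[OF near G'(2)] assms G'(1) by blast
  moreover have "a \<in> S" "b \<in> S"
    using ab(1,2) near_subset[OF near] by auto
  ultimately have "(a, b) \<in> (A \<times> B) \<inter> \<Inter>F"
    unfolding G'(3) level_preorder_def by auto
  then show "(A \<times> B) \<inter> \<Inter>F \<noteq> {}" by blast
qed

text \<open>Long blocks on which \<open>block_rank T\<close> decreases while the other ranks increase carry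
  more points than the far pairs of \<open>P\<close> can tell apart.\<close>
lemma level_preorder_block_rank_notin:
  assumes "T \<notin> \<A>"
  shows "level_preorder (block_rank T) \<notin> gen_qu (level_preorder ` block_rank ` \<A>)"
proof
  assume "level_preorder (block_rank T) \<in> gen_qu (level_preorder ` block_rank ` \<A>)"
  then obtain P F where PF: "finite P" "P \<subseteq> far_pairs" "finite F"
    "F \<subseteq> (level_preorder \<circ> block_rank) ` \<A>" "sep_all P \<inter> \<Inter>F \<subseteq> level_preorder (block_rank T)"
    by (elim gen_quE) (simp add: image_comp)
  obtain \<A>' where A': "\<A>' \<subseteq> \<A>" "finite \<A>'" "F = (level_preorder \<circ> block_rank) ` \<A>'"
    using finite_subset_image[OF PF(3,4)] by blast
  have "T \<notin> \<A>'"
    using assms A'(1) by blast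
  define L where "L = Suc (card (Pow P))"
  obtain q where q: "\<And>i j. i < j \<Longrightarrow> j < L \<Longrightarrow>
      (\<forall>A\<in>\<A>'. block_rank A (q i) \<le> block_rank A (q j)) \<and> block_rank T (q j) < block_rank T (q i)"
    using block_rank_separates[OF A'(2) \<open>T \<notin> \<A>'\<close>] by blast
  define pt where "pt n = (SOME x. x \<in> K n)" for n
  have pt: "pt n \<in> K n" for n
    unfolding pt_def some_in_eq by (rule K_nonempty)
  have pt_S: "pt n \<in> S" for n
    using pt UN_K by blast
  have "card (Pow P) < L"
    unfolding L_def by simp
  then obtain i j where ij: "i < j" "j < L" "(pt (q j), pt (q i)) \<in> sep_all P"
    using sep_all_pigeonhole[OF PF(1,2), of L "\<lambda>i. pt (q i)"] pt_S by blast
  have "(pt (q j), pt (q i)) \<in> \<Inter>F"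
    using q[OF ij(1,2)] pt_S unfolding A'(3) level_preorder_def by (auto simp: piece_eq[OF pt])
  moreover have "(pt (q j), pt (q i)) \<notin> level_preorder (block_rank T)"
    using q[OF ij(1,2)] unfolding level_preorder_def by (auto simp: piece_eq[OF pt])
  ultimately show False
    using ij(3) PF(5) by blast
qed

lemma level_preorder_block_rank_mem_iff:
  "level_preorder (block_rank T) \<in> gen_qu (level_preorder ` block_rank ` \<A>) \<longleftrightarrow> T \<in> \<A>"
proof
  assume mem: "level_preorder (block_rank T) \<in> gen_qu (level_preorder ` block_rank ` \<A>)"
  show "T \<in> \<A>"
  proof (rule ccontr)
    assume "T \<notin> \<A>"
    with mem show False
      using level_preorder_block_rank_notin by blast
  qed
next
  assume "T \<in> \<A>"
  then show "level_preorder (block_rank T) \<in> gen_qu (level_preorder ` block_rank ` \<A>)"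
    by (intro mem_gen_qu) (auto simp: level_preorder_def)
qed

lemma gen_qu_block_levels_mem:
  assumes "transitive_qu (coarsest_qu S \<delta>)"
  shows "gen_qu (level_preorder ` block_rank ` \<A>) \<in> qp_class S \<delta> \<inter> transitive_compatible_qus X"
proof -
  let ?\<U> = "gen_qu (level_preorder ` block_rank ` \<A>)"
  have qu: "quasi_uniformity S ?\<U>"
  proof (rule quasi_uniformity_gen_qu)
    fix E assume "E \<in> level_preorder ` block_rank ` \<A>"
    then obtain T where "E = level_preorder (block_rank T)"
      by blast
    then show "Id_on S \<subseteq> E \<and> trans E"
      using Id_on_subset_level_preorder trans_level_preorder by simp
  qed
  have qprox: "qprox_of S ?\<U> = \<delta>"
    by (rule qprox_of_gen_levels) (auto simp: filterlim_block_rank)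
  have "transitive_qu ?\<U>"
    by (rule transitive_gen_qu[OF assms[unfolded coarsest_qu_eq]]) (auto simp: trans_level_preorder)
  moreover have "qu_compatible X ?\<U>"
    using qu_compatible_if_qprox_of[OF compatible, unfolded topspace_eq, OF qu qprox] .
  ultimately show ?thesis
    using qu qprox by (simp add: qp_class_def transitive_compatible_qus_def topspace_eq)
qed

end

lemma compact_open_neighbourhood:
  assumes "locally_compact_space X" "X dim_le 0" "x \<in> topspace X"
  obtains U where "openin X U" "compactin X U" "x \<in> U"
proof -
  obtain U C where UC: "openin X U" "compactin X C" "x \<in> U" "U \<subseteq> C"
    using assms(1,3) unfolding locally_compact_space_def by meson
  have "neighbourhood_base_of (\<lambda>V. closedin X V \<and> openin X V) X"
    using assms(2) dimension_le_0_neighbourhood_base_of_clopen by blast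
  then have "\<exists>W V. openin X W \<and> (closedin X V \<and> openin X V) \<and> x \<in> W \<and> W \<subseteq> V \<and> V \<subseteq> U"
    using UC(1,3) unfolding neighbourhood_base_of by blast
  then obtain W V where V: "closedin X V" "openin X V" "x \<in> W" "W \<subseteq> V" "V \<subseteq> U"
    by blast
  have "compactin X V"
    using closed_compactin[OF UC(2) _ V(1)] V(5) UC(4) by blast
  then show ?thesis
    using V(2-4) by (intro that[of V]) auto
qed

lemma countable_compact_open_cover:
  assumes "locally_compact_space X" "Lindelof_space X" "X dim_le 0" "topspace X \<noteq> {}"
  obtains C :: "nat \<Rightarrow> 'a set"
  where "\<And>n. openin X (C n)" "\<And>n. compactin X (C n)" "(\<Union>n. C n) = topspace X"
proof -
  define \<U> where "\<U> = {U. openin X U \<and> compactin X U}"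
  have \<U>_open: "\<And>U. U \<in> \<U> \<Longrightarrow> openin X U"
    unfolding \<U>_def by blast
  have "\<Union>\<U> = topspace X"
  proof
    show "\<Union>\<U> \<subseteq> topspace X"
      using \<U>_open openin_subset by blast
    show "topspace X \<subseteq> \<Union>\<U>"
    proof
      fix x assume "x \<in> topspace X"
      then obtain U where "openin X U" "compactin X U" "x \<in> U"
        by (rule compact_open_neighbourhood[OF assms(1,3)])
      then show "x \<in> \<Union>\<U>"
        unfolding \<U>_def by blast
    qed
  qed
  with assms(2) \<U>_open have "\<exists>\<V>. countable \<V> \<and> \<V> \<subseteq> \<U> \<and> \<Union>\<V> = topspace X"
    by (rule Lindelof_spaceD)
  then obtain \<V> where \<V>: "countable \<V>" "\<V> \<subseteq> \<U>" "\<Union>\<V> = topspace X"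
    by (elim exE conjE)
  have "\<V> \<noteq> {}"
    using \<V>(3) assms(4) Union_empty by metis
  have C: "from_nat_into \<V> n \<in> \<U>" for n
    using from_nat_into[OF \<open>\<V> \<noteq> {}\<close>] \<V>(2) by blast
  show ?thesis
  proof (rule that[of "from_nat_into \<V>"])
    show "openin X (from_nat_into \<V> n)" "compactin X (from_nat_into \<V> n)" for n
      using C unfolding \<U>_def by auto
    show "(\<Union>n. from_nat_into \<V> n) = topspace X"
      using range_from_nat_into[OF \<open>\<V> \<noteq> {}\<close> \<V>(1)] \<V>(3) by simp
  qed
qed

text \<open>In a Hausdorff space compact sets are closed, so disjointifying a cover by compact
  open sets keeps its members compact and open.\<close>
lemma exists_compact_open_partition:
  assumes "locally_compact_space X" "Hausdorff_space X" "\<not> compact_space X"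
    and "Lindelof_space X" "X dim_le 0"
  obtains K :: "nat \<Rightarrow> 'a set"
  where "\<And>n. compactin X (K n)" "\<And>n. openin X (K n)" "\<And>n. K n \<noteq> {}"
    "disjoint_family K" "(\<Union>n. K n) = topspace X"
proof -
  have "topspace X \<noteq> {}"
    using assms(3) compactin_empty unfolding compact_space_def by metis
  then obtain C :: "nat \<Rightarrow> 'a set" where C: "\<And>n. openin X (C n)" "\<And>n. compactin X (C n)" "(\<Union>n. C n) = topspace X"
    using countable_compact_open_cover[OF assms(1,4,5)] by blast
  have C_closed: "closedin X (C n)" for n
    using compactin_imp_closedin[OF assms(2) C(2)] .
  define D where "D = disjointed C"
  have D_open: "openin X (D n)" for n
    unfolding D_def disjointed_def
    by (intro openin_diff C(1) closedin_Union) (auto intro: C_closed)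
  have D_compact: "compactin X (D n)" for n
  proof -
    have "closedin X (D n)"
      unfolding D_def disjointed_def
      by (intro closedin_diff C_closed openin_Union) (auto intro: C(1))
    then show ?thesis
      unfolding D_def by (rule closed_compactin[OF C(2) disjointed_subset])
  qed
  have D_cover: "(\<Union>n. D n) = topspace X"
    unfolding D_def UN_disjointed_eq by (fact C(3))
  define N where "N = {n. D n \<noteq> {}}"
  have "infinite N"
  proof
    assume "finite N"
    have "topspace X = \<Union>(D ` N)"
      using D_cover unfolding N_def by blast
    moreover have "compactin X (\<Union>(D ` N))"
      using \<open>finite N\<close> D_compact by (intro compactin_Union) auto
    ultimately show False
      using assms(3) unfolding compact_space_def by simp
  qed
  define K where "K k = D (enumerate N k)" for k
  show ?thesis
  proof (rule that[of K])
    show "compactin X (K n)" "openin X (K n)" for n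
      unfolding K_def by (fact D_compact D_open)+
    show "K n \<noteq> {}" for n
      unfolding K_def using enumerate_in_set[OF \<open>infinite N\<close>] unfolding N_def by simp
    have "K m \<inter> K n = {}" if "m \<noteq> n" for m n
    proof -
      have "enumerate N m \<noteq> enumerate N n"
        using inj_enumerate[OF \<open>infinite N\<close>] that by (meson injD)
      then show ?thesis
        using disjoint_family_disjointed[of C] unfolding K_def D_def disjoint_family_on_def by blast
    qed
    then show "disjoint_family K"
      unfolding disjoint_family_on_def by blast
    show "(\<Union>k. K k) = topspace X"
    proof
      show "(\<Union>k. K k) \<subseteq> topspace X"
        unfolding K_def using D_cover by blast
      show "topspace X \<subseteq> (\<Union>k. K k)"
      proof
        fix x assume "x \<in> topspace X"
        then obtain n where n: "x \<in> D n"
          using D_cover by blast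
        then have "n \<in> N"
          unfolding N_def by auto
        then obtain k where "enumerate N k = n"
          using enumerate_Ex[OF \<open>infinite N\<close>] by blast
        then show "x \<in> (\<Union>k. K k)"
          using n unfolding K_def by blast
      qed
    qed
  qed
qed

theorem corollary2p13:
  fixes X :: "'a topology" and \<delta> :: "'a set \<Rightarrow> 'a set \<Rightarrow> bool"
  assumes "locally_compact_space X" and "Hausdorff_space X"
    and "\<not> compact_space X" and "Lindelof_space X" and "X dim_le 0"
    and "quasi_proximity (topspace X) \<delta>" and "qp_compatible X \<delta>"
    and "transitive_qu (coarsest_qu (topspace X) \<delta>)"
  shows "\<exists>f :: nat set set \<Rightarrow> ('a \<times> 'a) set set.
           inj f \<and> range f \<subseteq> qp_class (topspace X) \<delta> \<inter> transitive_compatible_qus X"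
proof -
  obtain K :: "nat \<Rightarrow> 'a set" where K: "\<And>n. compactin X (K n)" "\<And>n. openin X (K n)"
    "\<And>n. K n \<noteq> {}" "disjoint_family K" "(\<Union>n. K n) = topspace X"
    using exists_compact_open_partition[OF assms(1-5)] by blast
  interpret compact_open_partition "topspace X" \<delta> X K
    using assms(6,7) K by unfold_locales auto
  define f where "f \<A> = gen_qu (level_preorder ` block_rank ` \<A>)" for \<A>
  have "inj f"
  proof (rule injI)
    fix \<A> \<B> assume eq: "f \<A> = f \<B>"
    show "\<A> = \<B>"
    proof (rule set_eqI)
      fix T
      show "T \<in> \<A> \<longleftrightarrow> T \<in> \<B>"
        using level_preorder_block_rank_mem_iff[of T \<A>] level_preorder_block_rank_mem_iff[of T \<B>] eq
        unfolding f_def by simp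
    qed
  qed
  moreover have "range f \<subseteq> qp_class (topspace X) \<delta> \<inter> transitive_compatible_qus X"
  proof (rule image_subsetI)
    fix \<A>
    show "f \<A> \<in> qp_class (topspace X) \<delta> \<inter> transitive_compatible_qus X"
      unfolding f_def by (rule gen_qu_block_levels_mem[OF assms(8)])
  qed
  ultimately show ?thesis
    by (intro exI[of _ f] conjI)
qed

end
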